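(* Let $(\mathcal I,T)$ be of class $\mathcal{DR}$, let $\mu$ be an admissible probability measure with density $\phi$, and fix a real $s>0$. Then the following identity holds in the ring of formal power series in $v,t$: $$\sum_{w\in\{0,1\}^\star}v^{|w|}\,t^{n(w)}\,p_\mu(w)^s=\sum_{n\ge0}v^n\,q(n)^s\sum_{k\ge0}t^k\,\mathbb G_{v,s}^k\big[S[\phi]^s\big](0,q(n)).$$ (For fixed powers of $v$ and $t$, the coefficient on the right-hand side is a finite sum.)
   Context: Let $\mathcal I=[0,1]$. A binary dynamical system is given by $c\in]0,1[$ and two $C^2$ bijections, $a:[0,1]\to[0,c]$ and $b:[0,1]\to[c,1]$. The map $T$ equals $a^{-1}$ on $]0,c[$ and $b^{-1}$ on $]c,1[$. Class $\mathcal{DR}$: $a$ is increasing, $b$ is decreasing, $a(0)=0$, $a(1)=c$, $b(0)=1$, $b(1)=c$, $a'>0$ and $b'<0$ on $[0,1]$, and $a'(x)<1$, $b'(x)>-1$ for $x\in]0,1]$. Coding: $h_0=a$, $h_1=b$; for $w=w_1\cdots w_k$, $h_w=h_{w_1}\circ\cdots\circ h_{w_k}$ and $\mathcal I_w=h_w(\mathcal I)$. Here $\{0,1\}^\star$ is the set of finite words (including the empty word $\varepsilon$, with $h_\varepsilon=\mathrm{id}$), $|w|$ is the length of $w$, and $n(w)$ is its number of ones. A probability $\mu$ is admissible if it has a strictly positive density $\phi\in C^1([0,1])$. Set $p_\mu(w)=\mu(\mathcal I_w)$. Let $q(n)=a^n(1)$, and $g_m=a^{m-1}\circ b$ for $m\ge1$.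 For a function $F$ on $[0,1]^2$ and $x\neq y$, define $$\mathbb G_{v,s}[F](x,y)=\sum_{m\ge1}v^m\Big|\frac{g_m(x)-g_m(y)}{x-y}\Big|^sF(g_m(x),g_m(y)),$$ with the diagonal value obtained by replacing the difference quotient by $|g_m'(x)|$. $S[\phi]$ is the function on $[0,1]^2$ defined by $$S[\phi](x,y)=\frac{1}{y-x}\int_x^y\phi(t)\,dt\quad(x\neq y),\qquad S[\phi](x,x)=\phi(x).$$ *)

theory Defs
  imports "HOL-Analysis.Analysis" "HOL-Computational_Algebra.Formal_Power_Series"
begin

definition C1_on01 :: "(real \<Rightarrow> real) \<Rightarrow> bool" where
  "C1_on01 f \<longleftrightarrow> (\<exists>f'. (\<forall>x\<in>{0..1}. (f has_real_derivative f' x) (at x within {0..1}))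
                         \<and> continuous_on {0..1} f')"

definition C2_on01 :: "(real \<Rightarrow> real) \<Rightarrow> bool" where
  "C2_on01 f \<longleftrightarrow> (\<exists>f' f''. (\<forall>x\<in>{0..1}. (f has_real_derivative f' x) (at x within {0..1})
                                   \<and> (f' has_real_derivative f'' x) (at x within {0..1}))
                         \<and> continuous_on {0..1} f'')"

definition der01 :: "(real \<Rightarrow> real) \<Rightarrow> real \<Rightarrow> real" where
  "der01 f x = vector_derivative f (at x within {0..1})"

definition classDR :: "real \<Rightarrow> (real \<Rightarrow> real) \<Rightarrow> (real \<Rightarrow> real) \<Rightarrow> bool" where
  "classDR c a b \<longleftrightarrow>
     0 < c \<and> c < 1 \<and>
     bij_betw a {0..1} {0..c} \<and> bij_betw b {0..1} {c..1} \<and>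
     C2_on01 a \<and> C2_on01 b \<and>
     strict_mono_on {0..1} a \<and> strict_antimono_on {0..1} b \<and>
     a 0 = 0 \<and> a 1 = c \<and> b 0 = 1 \<and> b 1 = c \<and>
     (\<forall>x\<in>{0..1}. der01 a x > 0 \<and> der01 b x < 0) \<and>
     (\<forall>x\<in>{0<..1}. der01 a x < 1 \<and> der01 b x > -1)"

definition admissible_density :: "(real \<Rightarrow> real) \<Rightarrow> bool" where
  "admissible_density \<phi> \<longleftrightarrow> C1_on01 \<phi> \<and> (\<forall>x\<in>{0..1}. \<phi> x > 0) \<and> integral {0..1} \<phi> = 1"

text \<open>Words over {0,1}: bool lists, True = 1. h_w = h_{w_1} o ... o h_{w_k}.\<close>
fun hw :: "(real \<Rightarrow> real) \<Rightarrow> (real \<Rightarrow> real) \<Rightarrow> bool list \<Rightarrow> real \<Rightarrow> real" where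
  "hw a b [] = id"
| "hw a b (l # w) = (if l then b else a) \<circ> hw a b w"

definition ones :: "bool list \<Rightarrow> nat" where
  "ones w = length (filter id w)"

definition pmu :: "(real \<Rightarrow> real) \<Rightarrow> (real \<Rightarrow> real) \<Rightarrow> (real \<Rightarrow> real) \<Rightarrow> bool list \<Rightarrow> real" where
  "pmu a b \<phi> w = integral (hw a b w ` {0..1}) \<phi>"

definition qn :: "(real \<Rightarrow> real) \<Rightarrow> nat \<Rightarrow> real" where
  "qn a n = (a ^^ n) 1"

definition gm :: "(real \<Rightarrow> real) \<Rightarrow> (real \<Rightarrow> real) \<Rightarrow> nat \<Rightarrow> real \<Rightarrow> real" where
  "gm a b m = (a ^^ (m - 1)) \<circ> b"

definition absdq :: "(real \<Rightarrow> real) \<Rightarrow> real \<Rightarrow> real \<Rightarrow> real" where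
  "absdq f x y = (if x = y then \<bar>der01 f x\<bar> else \<bar>(f x - f y) / (x - y)\<bar>)"

definition Sphi :: "(real \<Rightarrow> real) \<Rightarrow> real \<Rightarrow> real \<Rightarrow> real" where
  "Sphi \<phi> x y = (if x = y then \<phi> x
                  else integral {min x y..max x y} \<phi> / (max x y - min x y))"

text \<open>The operator G_{v,s} acting on functions with values in real fps (variable v):
  G[F](x,y) = sum_{m>=1} v^m |dq g_m (x,y)|^s F(g_m x, g_m y), written via its coefficients
  (the coefficient of v^N is a finite sum over 1 <= m <= N).\<close>
definition Gop :: "(real \<Rightarrow> real) \<Rightarrow> (real \<Rightarrow> real) \<Rightarrow> real
                   \<Rightarrow> (real \<Rightarrow> real \<Rightarrow> real fps) \<Rightarrow> (real \<Rightarrow> real \<Rightarrow> real fps)" where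
  "Gop a b s F = (\<lambda>x y. Abs_fps (\<lambda>N. \<Sum>m\<in>{1..N}.
        absdq (gm a b m) x y powr s * fps_nth (F (gm a b m x) (gm a b m y)) (N - m)))"

text \<open>Two-variable formal power series are elements of (real fps) fps:
  the outer variable is t, the inner variable is v.\<close>
definition LHS_series :: "(real \<Rightarrow> real) \<Rightarrow> (real \<Rightarrow> real) \<Rightarrow> (real \<Rightarrow> real) \<Rightarrow> real \<Rightarrow> real fps fps" where
  "LHS_series a b \<phi> s = Abs_fps (\<lambda>K. Abs_fps (\<lambda>N.
      \<Sum>w\<in>{w. length w = N \<and> ones w = K}. pmu a b \<phi> w powr s))"

definition RHS_series :: "(real \<Rightarrow> real) \<Rightarrow> (real \<Rightarrow> real) \<Rightarrow> (real \<Rightarrow> real) \<Rightarrow> real \<Rightarrow> real fps fps" where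
  "RHS_series a b \<phi> s = Abs_fps (\<lambda>K. Abs_fps (\<lambda>N.
      \<Sum>n\<le>N. qn a n powr s *
         fps_nth (((Gop a b s) ^^ K) (\<lambda>x y. fps_const (Sphi \<phi> x y powr s)) 0 (qn a n)) (N - n)))"

end

theory Submission
  imports Defs
begin

text \<open>
  Every word factors uniquely as \<open>u 0\<^sup>n\<close> with \<open>u\<close> empty or ending in \<open>1\<close>. Since \<open>a\<^sup>n\<close> maps
  \<open>[0,1]\<close> onto \<open>[0, q(n)]\<close>, \<open>p(u 0\<^sup>n)\<close> is the \<open>\<mu>\<close>-mass of \<open>h\<^sub>u([0, q(n)])\<close>. Peeling off the
  last block \<open>0\<^sup>m\<^sup>-\<^sup>1 1\<close> of \<open>u\<close> is the branch \<open>g\<^sub>m\<close> of \<open>G\<close>, and \<open>|x - y|\<^sup>s S[\<phi>](x,y)\<^sup>s\<close> is the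
  \<open>s\<close>-th power of the \<open>\<mu>\<close>-mass of \<open>[x,y]\<close>; so by induction on \<open>k\<close>, \<open>|x - y|\<^sup>s\<close> times the
  \<open>v\<^sup>N\<close>-coefficient of \<open>G\<^sup>k[S[\<phi>]\<^sup>s](x,y)\<close> is the sum of \<open>\<mu>(h\<^sub>u([x,y]))\<^sup>s\<close> over the words \<open>u\<close> of
  length \<open>N\<close> with \<open>k\<close> ones that are empty or end in \<open>1\<close>.
\<close>

definition words :: "nat \<Rightarrow> nat \<Rightarrow> bool list set" where
  "words N K = {w. length w = N \<and> ones w = K}"

definition trimmed_words :: "nat \<Rightarrow> nat \<Rightarrow> bool list set" where
  "trimmed_words N K = {w. length w = N \<and> ones w = K \<and> (w = [] \<or> last w)}"

lemma finite_trimmed_words: "finite (trimmed_words N K)"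
  unfolding trimmed_words_def
  by (rule finite_subset[OF _ finite_lists_length_eq[of "UNIV :: bool set" N]]) auto

lemma ones_Nil [simp]: "ones [] = 0"
  and ones_append [simp]: "ones (u @ v) = ones u + ones v"
  and ones_replicate_False [simp]: "ones (replicate n False) = 0"
  and ones_True [simp]: "ones [True] = 1"
  by (simp_all add: ones_def)

subsection \<open>Splitting off trailing zeros\<close>

definition trailing_zeros :: "bool list \<Rightarrow> nat" where
  "trailing_zeros w = length (takeWhile Not (rev w))"

definition strip_zeros :: "bool list \<Rightarrow> bool list" where
  "strip_zeros w = rev (dropWhile Not (rev w))"

lemma takeWhile_Not_eq_replicate: "takeWhile Not xs = replicate (length (takeWhile Not xs)) False"
  by (induction xs) auto

lemma strip_zeros_append_trailing_zeros:
  "strip_zeros w @ replicate (trailing_zeros w) False = w"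
proof -
  have "w = rev (dropWhile Not (rev w)) @ rev (takeWhile Not (rev w))"
    by (metis rev_append rev_rev_ident takeWhile_dropWhile_id)
  also have "rev (takeWhile Not (rev w)) = replicate (trailing_zeros w) False"
    unfolding trailing_zeros_def by (subst takeWhile_Not_eq_replicate) simp
  finally show ?thesis
    unfolding strip_zeros_def by simp
qed

lemma strip_zeros_Nil_or_last: "strip_zeros w = [] \<or> last (strip_zeros w)"
proof (cases "dropWhile Not (rev w)")
  case (Cons x xs)
  have "\<not> Not (hd (dropWhile Not (rev w)))"
    by (rule hd_dropWhile) (simp add: Cons)
  with Cons show ?thesis
    by (simp add: strip_zeros_def)
next
  case Nil
  then show ?thesis
    unfolding strip_zeros_def Nil by simp
qed

lemma trailing_zeros_strip_zeros_append:
  assumes "u = [] \<or> last u"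
  shows "trailing_zeros (u @ replicate n False) = n \<and> strip_zeros (u @ replicate n False) = u"
proof -
  have "takeWhile Not (rev u) = [] \<and> dropWhile Not (rev u) = rev u"
    using assms by (cases u rule: rev_cases) auto
  then show ?thesis
    unfolding trailing_zeros_def strip_zeros_def by (simp add: takeWhile_append dropWhile_append)
qed

lemma bij_betw_append_zeros:
  "bij_betw (\<lambda>(n, u). u @ replicate n False) (SIGMA n:{..N}. trimmed_words (N - n) K) (words N K)"
proof (rule bij_betw_byWitness[where f' = "\<lambda>w. (trailing_zeros w, strip_zeros w)"])
  show "\<forall>x\<in>(SIGMA n:{..N}. trimmed_words (N - n) K).
          (\<lambda>w. (trailing_zeros w, strip_zeros w)) ((\<lambda>(n, u). u @ replicate n False) x) = x"
    using trailing_zeros_strip_zeros_append by (auto simp: trimmed_words_def)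
  show "\<forall>w\<in>words N K. (\<lambda>(n, u). u @ replicate n False) (trailing_zeros w, strip_zeros w) = w"
    using strip_zeros_append_trailing_zeros by auto
  show "(\<lambda>(n, u). u @ replicate n False) ` (SIGMA n:{..N}. trimmed_words (N - n) K) \<subseteq> words N K"
    by (auto simp: trimmed_words_def words_def)
  have "(trailing_zeros w, strip_zeros w) \<in> (SIGMA n:{..N}. trimmed_words (N - n) K)"
    if "w \<in> words N K" for w
  proof -
    from strip_zeros_append_trailing_zeros[of w] that
    have "length (strip_zeros w) + trailing_zeros w = N" "ones (strip_zeros w) = K"
      by (auto simp: words_def dest: arg_cong[where f = length] arg_cong[where f = ones])
    then show ?thesis
      using strip_zeros_Nil_or_last[of w] by (auto simp: trimmed_words_def)
  qed
  then show "(\<lambda>w. (trailing_zeros w, strip_zeros w)) ` words N K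
               \<subseteq> (SIGMA n:{..N}. trimmed_words (N - n) K)"
    by blast
qed

lemma sum_words_by_trailing_zeros:
  "(\<Sum>w\<in>words N K. f w) = (\<Sum>n\<le>N. \<Sum>u\<in>trimmed_words (N - n) K. f (u @ replicate n False))"
  by (subst sum.reindex_bij_betw[symmetric, OF bij_betw_append_zeros])
     (simp add: sum.Sigma finite_trimmed_words split_def)

lemma trimmed_words_Suc_Suc: "trimmed_words (Suc M) (Suc K) = (\<lambda>w. w @ [True]) ` words M K"
proof
  show "trimmed_words (Suc M) (Suc K) \<subseteq> (\<lambda>w. w @ [True]) ` words M K"
  proof
    fix w assume w: "w \<in> trimmed_words (Suc M) (Suc K)"
    then have "w \<noteq> []" "last w"
      by (auto simp: trimmed_words_def)
    then have snoc: "w = butlast w @ [True]"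
      by (metis append_butlast_last_id)
    then have "ones w = ones (butlast w) + 1"
      by (metis ones_True ones_append)
    with w have "butlast w \<in> words M K"
      by (auto simp: trimmed_words_def words_def)
    with snoc show "w \<in> (\<lambda>w. w @ [True]) ` words M K"
      by blast
  qed
qed (auto simp: trimmed_words_def words_def)

lemma trimmed_words_0_Suc: "trimmed_words 0 (Suc K) = {}"
  by (auto simp: trimmed_words_def ones_def)

lemma trimmed_words_no_ones: "trimmed_words N 0 = (if N = 0 then {[]} else {})"
proof -
  have nonempty_excluded: "w \<notin> trimmed_words N 0" if "w \<noteq> []" for w
  proof
    assume "w \<in> trimmed_words N 0"
    then have "last w" "filter id w = []"
      using that unfolding trimmed_words_def ones_def by auto
    with that show False
      by (metis filter_empty_conv id_apply last_in_set)
  qed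
  have "w \<in> trimmed_words N 0 \<longleftrightarrow> w = [] \<and> N = 0" for w
    using nonempty_excluded[of w] by (cases "w = []") (auto simp: trimmed_words_def)
  then show ?thesis
    by auto
qed

lemma sum_trimmed_words_Suc:
  "(\<Sum>w\<in>trimmed_words N (Suc K). f w) =
     (\<Sum>m=1..N. \<Sum>u\<in>trimmed_words (N - m) K. f (u @ replicate (m - 1) False @ [True]))"
proof (cases N)
  case 0
  then show ?thesis
    by (simp add: trimmed_words_0_Suc)
next
  case (Suc M)
  have "(\<Sum>w\<in>trimmed_words N (Suc K). f w) = (\<Sum>w\<in>words M K. f (w @ [True]))"
    unfolding Suc trimmed_words_Suc_Suc by (subst sum.reindex) (auto simp: inj_on_def)
  also have "\<dots> = (\<Sum>n\<le>M. \<Sum>u\<in>trimmed_words (M - n) K. f (u @ replicate n False @ [True]))"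
    by (subst sum_words_by_trailing_zeros) simp
  also have "\<dots> = (\<Sum>m\<in>Suc ` {..M}.
                    \<Sum>u\<in>trimmed_words (N - m) K. f (u @ replicate (m - 1) False @ [True]))"
    by (simp add: sum.reindex Suc)
  also have "Suc ` {..M} = {1..N}"
    using Suc image_Suc_atMost by simp
  finally show ?thesis .
qed

lemma hw_append: "hw a b (u @ v) = hw a b u \<circ> hw a b v"
  by (induction u) (auto simp: comp_assoc)

lemma hw_replicate_False: "hw a b (replicate n False) = a ^^ n"
  by (induction n) auto

lemma gm_eq_hw: "1 \<le> m \<Longrightarrow> gm a b m = hw a b (replicate (m - 1) False @ [True])"
  by (simp add: gm_def hw_append hw_replicate_False)

lemma strict_mono_on_image_interval:
  fixes f :: "real \<Rightarrow> real"
  assumes mono: "strict_mono_on {l..r} f" and onto: "f ` {l..r} = {p..q}"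
    and x: "x \<in> {l..r}" and y: "y \<in> {l..r}"
  shows "f ` {min x y..max x y} = {min (f x) (f y)..max (f x) (f y)}"
proof -
  have ordered: "f ` {x..y} = {f x..f y}"
    if x: "x \<in> {l..r}" and y: "y \<in> {l..r}" and "x \<le> y" for x y
  proof
    show "f ` {x..y} \<subseteq> {f x..f y}"
      using x y by (auto intro!: strict_mono_on_leD[OF mono])
    show "{f x..f y} \<subseteq> f ` {x..y}"
    proof
      fix z assume z: "z \<in> {f x..f y}"
      have "{f x..f y} \<subseteq> f ` {l..r}"
        using x y onto by auto
      with z obtain t where t: "t \<in> {l..r}" "z = f t"
        by blast
      have "\<not> t < x" "\<not> y < t"
        using strict_mono_onD[OF mono t(1) x] strict_mono_onD[OF mono y t(1)] t z by auto
      with t show "z \<in> f ` {x..y}"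
        by auto
    qed
  qed
  show ?thesis
  proof (cases "x \<le> y")
    case True
    then show ?thesis
      using ordered[OF x y] strict_mono_on_leD[OF mono x y] by (simp add: min_def max_def)
  next
    case False
    then show ?thesis
      using ordered[OF y x] strict_mono_on_leD[OF mono y x] by (auto simp: min_def max_def)
  qed
qed

lemma strict_antimono_on_image_interval:
  fixes f :: "real \<Rightarrow> real"
  assumes "strict_antimono_on {l..r} f" and onto: "f ` {l..r} = {p..q}"
    and "x \<in> {l..r}" and "y \<in> {l..r}"
  shows "f ` {min x y..max x y} = {min (f x) (f y)..max (f x) (f y)}"
proof -
  have "strict_mono_on {l..r} (\<lambda>t. - f t)"
    using assms(1) by (auto simp: monotone_on_def)
  moreover have "(\<lambda>t. - f t) ` {l..r} = {-q..-p}"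
    using onto by (metis image_image image_uminus_atLeastAtMost)
  ultimately have "(\<lambda>t. - f t) ` {min x y..max x y} = {min (- f x) (- f y)..max (- f x) (- f y)}"
    using strict_mono_on_image_interval assms(3,4) by blast
  then have "uminus ` (\<lambda>t. - f t) ` {min x y..max x y} =
             uminus ` {min (- f x) (- f y)..max (- f x) (- f y)}"
    by simp
  then show ?thesis
    by (simp add: image_image min_def max_def split: if_splits)
qed

definition segment_integral :: "(real \<Rightarrow> real) \<Rightarrow> real \<Rightarrow> real \<Rightarrow> real" where
  "segment_integral \<phi> x y = integral {min x y..max x y} \<phi>"

lemma segment_integral_nonneg:
  assumes "\<forall>t\<in>{0..1}. 0 \<le> \<phi> t" and "x \<in> {0..1}" and "y \<in> {0..1}"
  shows "0 \<le> segment_integral \<phi> x y"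
proof -
  have "\<forall>t\<in>{min x y..max x y}. 0 \<le> \<phi> t"
    using assms by (auto simp: min_def max_def)
  then show ?thesis
    unfolding segment_integral_def
    by (cases "\<phi> integrable_on {min x y..max x y}")
       (auto intro!: integral_nonneg simp: not_integrable_integral)
qed

lemma abs_diff_powr_Sphi:
  assumes "\<forall>t\<in>{0..1}. 0 \<le> \<phi> t" and "x \<in> {0..1}" and "y \<in> {0..1}" and "x \<noteq> y"
  shows "\<bar>x - y\<bar> powr s * Sphi \<phi> x y powr s = segment_integral \<phi> x y powr s"
proof -
  have S: "Sphi \<phi> x y = segment_integral \<phi> x y / \<bar>x - y\<bar>"
    using assms(4) by (auto simp: Sphi_def segment_integral_def min_def max_def)
  have "0 \<le> Sphi \<phi> x y"
    unfolding S using segment_integral_nonneg[OF assms(1-3)] by simp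
  then have "\<bar>x - y\<bar> powr s * Sphi \<phi> x y powr s = (\<bar>x - y\<bar> * Sphi \<phi> x y) powr s"
    by (simp add: powr_mult)
  also have "\<bar>x - y\<bar> * Sphi \<phi> x y = segment_integral \<phi> x y"
    using assms(4) by (simp add: S)
  finally show ?thesis .
qed

lemma abs_diff_powr_absdq:
  "x \<noteq> y \<Longrightarrow> \<bar>x - y\<bar> powr s * absdq f x y powr s = \<bar>f x - f y\<bar> powr s"
  by (simp add: absdq_def abs_divide flip: powr_mult)

subsection \<open>The operator \<open>G\<close> as a sum over words\<close>

context
  fixes a b :: "real \<Rightarrow> real" and c :: real and \<phi> :: "real \<Rightarrow> real" and s :: real
  assumes a_mono: "strict_mono_on {0..1} a" and a_onto: "a ` {0..1} = {0..c}" and a_zero: "a 0 = 0"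
    and b_antimono: "strict_antimono_on {0..1} b" and b_onto: "b ` {0..1} = {c..1}"
    and c_bounds: "0 < c" "c < 1"
    and phi_nonneg: "\<forall>t\<in>{0..1}. 0 \<le> \<phi> t"
begin

abbreviation Gop_iterate :: "nat \<Rightarrow> real \<Rightarrow> real \<Rightarrow> real fps" where
  "Gop_iterate K \<equiv> (Gop a b s ^^ K) (\<lambda>x y. fps_const (Sphi \<phi> x y powr s))"

lemma hw_in_unit: "x \<in> {0..1} \<Longrightarrow> hw a b u x \<in> {0..1}"
proof (induction u)
  case (Cons l u)
  then have "a (hw a b u x) \<in> {0..c}" "b (hw a b u x) \<in> {c..1}"
    using a_onto b_onto by blast+
  with c_bounds show ?case
    by auto
qed simp

lemma hw_inj: "x \<in> {0..1} \<Longrightarrow> y \<in> {0..1} \<Longrightarrow> x \<noteq> y \<Longrightarrow> hw a b u x \<noteq> hw a b u y"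
proof (induction u)
  case (Cons l u)
  then have "hw a b u x \<in> {0..1}" "hw a b u y \<in> {0..1}" "hw a b u x \<noteq> hw a b u y"
    using hw_in_unit by auto
  then show ?case
    using strict_mono_on_imp_inj_on[OF a_mono] b_antimono[unfolded strict_antimono_iff_antimono]
    by (auto dest: inj_onD)
qed simp

lemma hw_image_interval:
  "x \<in> {0..1} \<Longrightarrow> y \<in> {0..1} \<Longrightarrow>
     hw a b u ` {min x y..max x y} = {min (hw a b u x) (hw a b u y)..max (hw a b u x) (hw a b u y)}"
proof (induction u)
  case (Cons l u)
  have in_unit: "hw a b u x \<in> {0..1}" "hw a b u y \<in> {0..1}"
    using Cons.prems hw_in_unit by auto
  have "hw a b (l # u) ` {min x y..max x y} = (if l then b else a) ` hw a b u ` {min x y..max x y}"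
    by (simp add: image_comp)
  also have "\<dots> = (if l then b else a) ` {min (hw a b u x) (hw a b u y)..max (hw a b u x) (hw a b u y)}"
    using Cons by simp
  also have "\<dots> = {min (hw a b (l # u) x) (hw a b (l # u) y)..max (hw a b (l # u) x) (hw a b (l # u) y)}"
  proof (cases l)
    case True
    then show ?thesis
      using strict_antimono_on_image_interval[OF b_antimono b_onto in_unit] by simp
  next
    case False
    then show ?thesis
      using strict_mono_on_image_interval[OF a_mono a_onto in_unit] by simp
  qed
  finally show ?case .
qed simp

lemma Gop_iterate_coeff:
  assumes "x \<in> {0..1}" and "y \<in> {0..1}" and "x \<noteq> y"
  shows "\<bar>x - y\<bar> powr s * fps_nth (Gop_iterate K x y) N
           = (\<Sum>u\<in>trimmed_words N K. segment_integral \<phi> (hw a b u x) (hw a b u y) powr s)"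
  using assms
proof (induction K arbitrary: x y N)
  case 0
  then show ?case
    using abs_diff_powr_Sphi[OF phi_nonneg] by (simp add: trimmed_words_no_ones)
next
  case (Suc K)
  have "\<bar>x - y\<bar> powr s * fps_nth (Gop_iterate (Suc K) x y) N
      = (\<Sum>m=1..N. \<bar>gm a b m x - gm a b m y\<bar> powr s *
                     fps_nth (Gop_iterate K (gm a b m x) (gm a b m y)) (N - m))"
    using Suc.prems
    by (simp add: Gop_def sum_distrib_left abs_diff_powr_absdq mult.assoc[symmetric])
  also have "\<dots> = (\<Sum>m=1..N. \<Sum>u\<in>trimmed_words (N - m) K.
                    segment_integral \<phi> (hw a b (u @ replicate (m - 1) False @ [True]) x)
                                       (hw a b (u @ replicate (m - 1) False @ [True]) y) powr s)"
  proof (rule sum.cong[OF refl])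
    fix m assume "m \<in> {1..N}"
    then have g: "gm a b m = hw a b (replicate (m - 1) False @ [True])"
      by (simp add: gm_eq_hw)
    then have "gm a b m x \<in> {0..1}" "gm a b m y \<in> {0..1}" "gm a b m x \<noteq> gm a b m y"
      using hw_in_unit hw_inj Suc.prems by auto
    from Suc.IH[OF this, of "N - m"]
    show "\<bar>gm a b m x - gm a b m y\<bar> powr s *
            fps_nth (Gop_iterate K (gm a b m x) (gm a b m y)) (N - m) =
          (\<Sum>u\<in>trimmed_words (N - m) K.
             segment_integral \<phi> (hw a b (u @ replicate (m - 1) False @ [True]) x)
                                (hw a b (u @ replicate (m - 1) False @ [True]) y) powr s)"
      by (simp add: g hw_append)
  qed
  also have "\<dots> = (\<Sum>u\<in>trimmed_words N (Suc K). segment_integral \<phi> (hw a b u x) (hw a b u y) powr s)"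
    by (rule sum_trimmed_words_Suc[symmetric])
  finally show ?case .
qed

lemma qn_in_unit: "qn a n \<in> {0..1}"
  and qn_nonzero: "qn a n \<noteq> 0"
  and pmu_append_zeros:
    "pmu a b \<phi> (u @ replicate n False) = segment_integral \<phi> (hw a b u 0) (hw a b u (qn a n))"
proof -
  have an0: "(a ^^ n) 0 = 0"
    by (induction n) (simp_all add: a_zero)
  have q: "qn a n = hw a b (replicate n False) 1"
    by (simp add: qn_def hw_replicate_False)
  show "qn a n \<in> {0..1}" "qn a n \<noteq> 0"
    using hw_in_unit[of 1 "replicate n False"] hw_inj[of 0 1 "replicate n False"]
    by (simp_all add: q hw_replicate_False an0)
  have "hw a b (u @ replicate n False) ` {min 0 1..max 0 1} =
        {min (hw a b (u @ replicate n False) 0) (hw a b (u @ replicate n False) 1)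
         ..max (hw a b (u @ replicate n False) 0) (hw a b (u @ replicate n False) 1)}"
    by (rule hw_image_interval) auto
  then show "pmu a b \<phi> (u @ replicate n False) = segment_integral \<phi> (hw a b u 0) (hw a b u (qn a n))"
    unfolding pmu_def segment_integral_def by (simp add: hw_append hw_replicate_False an0 qn_def)
qed

lemma series_coeff_identity:
  "(\<Sum>w\<in>words N K. pmu a b \<phi> w powr s) =
     (\<Sum>n\<le>N. qn a n powr s * fps_nth (Gop_iterate K 0 (qn a n)) (N - n))"
  unfolding sum_words_by_trailing_zeros
proof (rule sum.cong[OF refl])
  fix n
  have "(\<Sum>u\<in>trimmed_words (N - n) K. pmu a b \<phi> (u @ replicate n False) powr s) =
        (\<Sum>u\<in>trimmed_words (N - n) K. segment_integral \<phi> (hw a b u 0) (hw a b u (qn a n)) powr s)"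
    by (simp only: pmu_append_zeros)
  also have "\<dots> = \<bar>0 - qn a n\<bar> powr s * fps_nth (Gop_iterate K 0 (qn a n)) (N - n)"
    by (rule Gop_iterate_coeff[symmetric]) (use qn_in_unit qn_nonzero in auto)
  also have "\<dots> = qn a n powr s * fps_nth (Gop_iterate K 0 (qn a n)) (N - n)"
    using qn_in_unit by simp
  finally show "(\<Sum>u\<in>trimmed_words (N - n) K. pmu a b \<phi> (u @ replicate n False) powr s) = \<dots>" .
qed

end

theorem theorem5p1:
  fixes c :: real and a b \<phi> :: "real \<Rightarrow> real" and s :: real
  assumes "classDR c a b"
    and "admissible_density \<phi>"
    and "s > 0"
  shows "LHS_series a b \<phi> s = RHS_series a b \<phi> s"
proof -
  from assms(1) have "strict_mono_on {0..1} a" "a ` {0..1} = {0..c}" "a 0 = 0"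
    "strict_antimono_on {0..1} b" "b ` {0..1} = {c..1}" "0 < c" "c < 1"
    unfolding classDR_def bij_betw_def by blast+
  moreover have "\<forall>t\<in>{0..1}. 0 \<le> \<phi> t"
    using assms(2) unfolding admissible_density_def by (meson less_imp_le)
  ultimately have coeff: "(\<Sum>w\<in>{w. length w = N \<and> ones w = K}. pmu a b \<phi> w powr s) =
         (\<Sum>n\<le>N. qn a n powr s *
            fps_nth ((Gop a b s ^^ K) (\<lambda>x y. fps_const (Sphi \<phi> x y powr s)) 0 (qn a n)) (N - n))"
    for N K
    unfolding words_def[symmetric] by (rule series_coeff_identity)
  show ?thesis
    unfolding LHS_series_def RHS_series_def coeff ..
qed

end
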